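(* Let $X$ be a real vector space and let $K\subseteq X$ be a nontrivial convex cone having a convex and relatively solid base $B$. Then $K^{ss}:=\{l\in X':\ \inf_{b\in B}l(b)>0\}$ is nonempty.
   Context: $X'$ is the algebraic dual of $X$. $K$ nontrivial means $K\ne\{0\}$, $K\ne X$. A base of $K$ is a set $B$ with $0\notin B$ such that each $k\in K\setminus\{0\}$ has a unique representation $k=tb$ with $t>0$, $b\in B$. $B$ is relatively solid if $icr(B)\neq\emptyset$, where $icr(B):=\{x\in B:\ \forall x'\in span(B-B)\ \exists \lambda'>0 \text{ with } x+\lambda x'\in B\ \forall\lambda\in[0,\lambda']\}$. *)

theory Defs
  imports "HOL-Analysis.Analysis"
begin

definition is_base :: "'a::real_vector set \<Rightarrow> 'a set \<Rightarrow> bool" where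
  "is_base K B \<longleftrightarrow> 0 \<notin> B \<and> B \<subseteq> K \<and>
     (\<forall>k\<in>K - {0}. \<exists>!p. fst p > 0 \<and> snd p \<in> B \<and> k = fst p *\<^sub>R snd p)"

definition icr :: "'a::real_vector set \<Rightarrow> 'a set" where
  "icr B = {x \<in> B. \<forall>x' \<in> span {y - z | y z. y \<in> B \<and> z \<in> B}.
              \<exists>l'>0. \<forall>l\<in>{0..l'}. x + l *\<^sub>R x' \<in> B}"

definition relatively_solid :: "'a::real_vector set \<Rightarrow> bool" where
  "relatively_solid B \<longleftrightarrow> icr B \<noteq> {}"

text \<open>K^ss: linear functionals (elements of the algebraic dual) whose infimum
over B is strictly positive, i.e. which are bounded below on B by some eps > 0.\<close>
definition Kss :: "'a::real_vector set \<Rightarrow> ('a \<Rightarrow> real) set" where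
  "Kss B = {l. linear l \<and> (\<exists>e>0. \<forall>b\<in>B. e \<le> l b)}"

end

theory Submission
  imports Defs
begin

text \<open>The uniqueness in the definition of a base forbids a base from containing two distinct
  positive multiples of the same vector. A point x of the intrinsic core may be moved within
  B in every direction of span (B - B); if x itself were such a direction, B would contain
  (1 + l) x as well as x. Hence x lies outside span (B - B), so some linear functional equals 1
  at x and vanishes on span (B - B), and it is then identically 1 on B.\<close>

lemma is_base_scaleR_notin:
  assumes "is_base K B" and "b \<in> B" and "t > 0" and "t \<noteq> 1"
  shows "t *\<^sub>R b \<notin> B"
proof
  assume tb: "t *\<^sub>R b \<in> B"
  have "0 \<notin> B" "B \<subseteq> K"
    and unique: "\<forall>k\<in>K - {0}. \<exists>!p. fst p > 0 \<and> snd p \<in> B \<and> k = fst p *\<^sub>R snd p"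
    using assms(1) unfolding is_base_def by auto
  then have "t *\<^sub>R b \<in> K - {0}" using tb by auto
  with unique have "\<exists>!p. fst p > 0 \<and> snd p \<in> B \<and> t *\<^sub>R b = fst p *\<^sub>R snd p" by blast
  moreover have "fst (1::real, t *\<^sub>R b) > 0 \<and> snd (1::real, t *\<^sub>R b) \<in> B
      \<and> t *\<^sub>R b = fst (1::real, t *\<^sub>R b) *\<^sub>R snd (1::real, t *\<^sub>R b)"
    using tb by simp
  moreover have "fst (t, b) > 0 \<and> snd (t, b) \<in> B \<and> t *\<^sub>R b = fst (t, b) *\<^sub>R snd (t, b)"
    using assms(2,3) by simp
  ultimately have "(1, t *\<^sub>R b) = (t, b)" by blast
  then show False using assms(4) by simp
qed

lemma icr_notin_span_diffs:
  assumes "is_base K B" and "x \<in> icr B"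
  shows "x \<notin> span {y - z | y z. y \<in> B \<and> z \<in> B}"
proof
  assume "x \<in> span {y - z | y z. y \<in> B \<and> z \<in> B}"
  then obtain l where l: "l > 0" "\<forall>s\<in>{0..l}. x + s *\<^sub>R x \<in> B"
    using assms(2) unfolding icr_def by blast
  have "x + l *\<^sub>R x \<in> B" using l by simp
  then have "(1 + l) *\<^sub>R x \<in> B" by (simp add: scaleR_add_left)
  moreover have "x \<in> B" using assms(2) unfolding icr_def by blast
  ultimately show False
    using is_base_scaleR_notin[OF assms(1), of x "1 + l"] l(1) by simp
qed

lemma linear_functional_notin_span:
  fixes x :: "'a::real_vector"
  assumes "x \<notin> span S"
  obtains g :: "'a \<Rightarrow> real" where "linear g" "g x = 1" "\<And>y. y \<in> span S \<Longrightarrow> g y = 0"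
proof -
  obtain C where C: "C \<subseteq> S" "independent C" "S \<subseteq> span C"
    using maximal_independent_subset by blast
  have x_C: "x \<notin> span C" using assms span_mono[OF C(1)] by blast
  then have "independent (insert x C)" using C(2) by (rule independent_insertI)
  from linear_independent_extend[OF this, of "\<lambda>y. if y = x then 1 else 0"]
  obtain g :: "'a \<Rightarrow> real"
    where g: "linear g" "\<forall>y\<in>insert x C. g y = (if y = x then 1 else 0)"
    by blast
  have "\<forall>y\<in>C. g y = 0"
  proof
    fix y assume "y \<in> C"
    then have "y \<noteq> x" using x_C span_base by blast
    then show "g y = 0" using g(2) \<open>y \<in> C\<close> by simp
  qed
  then have "\<forall>y\<in>span C. g y = 0" using linear_eq_0_on_span[OF g(1)] by blast
  moreover have "span S \<subseteq> span C" using C(3) by (simp add: span_minimal)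
  moreover have "g x = 1" using g(2) by simp
  ultimately show ?thesis using that[OF g(1)] by blast
qed

theorem lemma4p15:
  fixes K B :: "'a::real_vector set"
  assumes "convex K" and "cone K"
    and "K \<noteq> {0}" and "K \<noteq> UNIV"
    and "is_base K B" and "convex B" and "relatively_solid B"
  shows "Kss B \<noteq> {}"
proof -
  obtain x where x: "x \<in> icr B" using assms(7) unfolding relatively_solid_def by blast
  then have "x \<in> B" unfolding icr_def by blast
  obtain g :: "'a \<Rightarrow> real" where g: "linear g" "g x = 1"
    and g_diffs: "\<And>y. y \<in> span {y - z | y z. y \<in> B \<and> z \<in> B} \<Longrightarrow> g y = 0"
    using linear_functional_notin_span[OF icr_notin_span_diffs[OF assms(5) x]] by blast
  have "g b = 1" if "b \<in> B" for b
  proof -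
    have "b - x \<in> {y - z | y z. y \<in> B \<and> z \<in> B}" using \<open>b \<in> B\<close> \<open>x \<in> B\<close> by blast
    then have "g (b - x) = 0" by (intro g_diffs span_base)
    then show ?thesis using g by (simp add: linear_diff)
  qed
  then have "g \<in> Kss B" using g(1) unfolding Kss_def by (auto intro!: exI[of _ 1])
  then show ?thesis by blast
qed

end
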